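(* Let $\mathcal C$ be a hereditary class of graphs with infinite VC-dimension and let $H=(H_\ell\cup H_r,E)$ be a bipartite graph with bipartition $(H_\ell,H_r)$. Then at least one of the four graphs $H^{0,0},H^{1,0},H^{0,1},H^{1,1}$ belongs to $\mathcal C$.
   Context: A class of graphs is hereditary if it is closed under isomorphism and under taking induced subgraphs. A set $X\subseteq V(G)$ is shattered if for every $S\subseteq X$ there is a vertex $v$ with $N[v]\cap X=S$ (where $N[v]$ is the closed neighbourhood); the VC-dimension of $G$ is the largest size of a shattered set; a class has infinite VC-dimension if these are unbounded over the class. For a bipartite graph $H$ with bipartition $(A,B)$: $H^{0,0}=H$; $H^{1,0}$ is obtained from $H$ by adding all edges between vertices of $A$ (making $A$ a clique); $H^{0,1}$ is obtained by making $B$ a clique; $H^{1,1}$ is obtained by making both $A$ and $B$ cliques. *)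

theory Defs
  imports Main
begin

text \<open>Vertices are natural numbers; since
  classes are closed under isomorphism, this is no loss of generality for finite graphs.\<close>

type_synonym 'a graph = "'a set \<times> ('a \<times> 'a) set"

abbreviation verts :: "'a graph \<Rightarrow> 'a set" where "verts G \<equiv> fst G"
abbreviation edges :: "'a graph \<Rightarrow> ('a \<times> 'a) set" where "edges G \<equiv> snd G"

definition is_graph :: "'a graph \<Rightarrow> bool" where
  "is_graph G \<longleftrightarrow> finite (verts G) \<and> edges G \<subseteq> verts G \<times> verts G
     \<and> (\<forall>u v. (u, v) \<in> edges G \<longrightarrow> (v, u) \<in> edges G)
     \<and> (\<forall>v. (v, v) \<notin> edges G)"

definition graph_iso :: "'a graph \<Rightarrow> 'b graph \<Rightarrow> bool" where
  "graph_iso G G' \<longleftrightarrow> (\<exists>f. bij_betw f (verts G) (verts G')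
     \<and> (\<forall>u\<in>verts G. \<forall>v\<in>verts G. (u, v) \<in> edges G \<longleftrightarrow> (f u, f v) \<in> edges G'))"

definition induced_subgraph :: "'a graph \<Rightarrow> 'a set \<Rightarrow> 'a graph" where
  "induced_subgraph G X = (X, edges G \<inter> (X \<times> X))"

definition hereditary :: "nat graph set \<Rightarrow> bool" where
  "hereditary \<C> \<longleftrightarrow> (\<forall>G\<in>\<C>. is_graph G)
     \<and> (\<forall>G\<in>\<C>. \<forall>G'. is_graph G' \<and> graph_iso G G' \<longrightarrow> G' \<in> \<C>)
     \<and> (\<forall>G\<in>\<C>. \<forall>X. X \<subseteq> verts G \<longrightarrow> induced_subgraph G X \<in> \<C>)"

definition closed_nbhd :: "'a graph \<Rightarrow> 'a \<Rightarrow> 'a set" where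
  "closed_nbhd G v = insert v {u. (v, u) \<in> edges G}"

definition shattered :: "'a graph \<Rightarrow> 'a set \<Rightarrow> bool" where
  "shattered G X \<longleftrightarrow> X \<subseteq> verts G
     \<and> (\<forall>S. S \<subseteq> X \<longrightarrow> (\<exists>v\<in>verts G. closed_nbhd G v \<inter> X = S))"

definition infinite_VC_dim :: "'a graph set \<Rightarrow> bool" where
  "infinite_VC_dim \<C> \<longleftrightarrow> (\<forall>k::nat. \<exists>G\<in>\<C>. \<exists>X. shattered G X \<and> card X \<ge> k)"

definition bipartite_with :: "'a graph \<Rightarrow> 'a set \<Rightarrow> 'a set \<Rightarrow> bool" where
  "bipartite_with H A B \<longleftrightarrow> is_graph H \<and> A \<inter> B = {} \<and> A \<union> B = verts H
     \<and> edges H \<subseteq> (A \<times> B) \<union> (B \<times> A)"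

definition make_clique :: "'a graph \<Rightarrow> 'a set \<Rightarrow> 'a graph" where
  "make_clique G A = (verts G, edges G \<union> {(u, v). u \<in> A \<and> v \<in> A \<and> u \<noteq> v})"

text \<open>H^{i,j}: i = True makes A a clique, j = True makes B a clique.\<close>
definition bip_variant :: "'a graph \<Rightarrow> 'a set \<Rightarrow> 'a set \<Rightarrow> bool \<Rightarrow> bool \<Rightarrow> 'a graph" where
  "bip_variant H A B i j =
     (let H1 = (if i then make_clique H A else H) in if j then make_clique H1 B else H1)"

end

theory Submission
  imports Defs "HOL-Library.Ramsey"
begin

(* Let p = |A| and q = |B|.  Fix a finite label set T, large enough
   for Ramsey's theorem to give a homogeneous p-subset of any T-indexed family of
   vertices.  By infinite VC-dimension and Ramsey's theorem, some G \<in> C contains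
   a shattered set Y, homogeneous of some colour j, in bijection e with the
   patterns Pow T \<times> {..<q+2}.  Shattering gives for each label t a witness w t
   adjacent exactly to the points e(P,k) with t \<in> P; homogeneity of Y forces the
   witnesses to lie outside Y and to be pairwise distinct.  Ramsey's theorem picks
   p witnesses forming a homogeneous set of colour i.  Sending A to these
   witnesses and each b \<in> B to a point e(P,k), where P encodes the neighbourhood
   of b, is an induced embedding of H^{i,j} into G, so H^{i,j} \<in> C by heredity. *)

definition homogeneous :: "('a \<times> 'a) set \<Rightarrow> 'a set \<Rightarrow> bool \<Rightarrow> bool" where
  "homogeneous R U c \<longleftrightarrow> (\<forall>u\<in>U. \<forall>v\<in>U. u \<noteq> v \<longrightarrow> ((u, v) \<in> R \<longleftrightarrow> c))"

definition induced_embedding :: "'a graph \<Rightarrow> 'b graph \<Rightarrow> ('a \<Rightarrow> 'b) \<Rightarrow> bool" where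
  "induced_embedding H G \<phi> \<longleftrightarrow> inj_on \<phi> (verts H) \<and> \<phi> ` verts H \<subseteq> verts G
     \<and> (\<forall>u\<in>verts H. \<forall>v\<in>verts H. (u, v) \<in> edges H \<longleftrightarrow> (\<phi> u, \<phi> v) \<in> edges G)"

lemma ramsey_homogeneous:
  "\<exists>r. \<forall>(V::'a set) R. finite V \<longrightarrow> card V \<ge> r \<longrightarrow> sym R \<longrightarrow>
     (\<exists>U\<subseteq>V. card U = m \<and> (\<exists>c. homogeneous R U c))"
proof -
  obtain r where r: "\<forall>(V::'a set) E. finite V \<and> card V \<ge> r \<longrightarrow>
      (\<exists>U \<subseteq> V. card U = m \<and> clique U E \<or> card U = m \<and> indep U E)"
    using ramsey2[of m m] by blast
  have "\<exists>U\<subseteq>V. card U = m \<and> (\<exists>c. homogeneous R U c)"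
    if V: "finite V" "card V \<ge> r" and R: "sym R" for V :: "'a set" and R
  proof -
    define E where "E = {{u, v} | u v. (u, v) \<in> R}"
    have E: "{u, v} \<in> E \<longleftrightarrow> (u, v) \<in> R" for u v
      using R by (auto simp: E_def doubleton_eq_iff sym_def)
    obtain U where "U \<subseteq> V" "card U = m" "clique U E \<or> indep U E"
      using r V by blast
    then show ?thesis
      by (metis E clique_def indep_def homogeneous_def)
  qed
  then show ?thesis by blast
qed

lemma homogeneous_subset: "homogeneous R U c \<Longrightarrow> V \<subseteq> U \<Longrightarrow> homogeneous R V c"
  unfolding homogeneous_def by blast

lemma homogeneous_image:
  "homogeneous {(s, t). (f s, f t) \<in> R} U c \<Longrightarrow> homogeneous R (f ` U) c"
  unfolding homogeneous_def by auto

lemma induced_embedding_in_class: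
  fixes C :: "nat graph set" and G H :: "nat graph"
  assumes hC: "hereditary C" and G: "G \<in> C" and H: "is_graph H"
    and emb: "induced_embedding H G \<phi>"
  shows "H \<in> C"
proof -
  let ?V = "\<phi> ` verts H"
  have inj: "inj_on \<phi> (verts H)" and sub: "?V \<subseteq> verts G"
    using emb by (auto simp: induced_embedding_def)
  have "induced_subgraph G ?V \<in> C" using hC G sub unfolding hereditary_def by blast
  moreover have "graph_iso (induced_subgraph G ?V) H"
    unfolding graph_iso_def induced_subgraph_def fst_conv snd_conv
  proof (intro exI[of _ "inv_into (verts H) \<phi>"] conjI ballI)
    show "bij_betw (inv_into (verts H) \<phi>) ?V (verts H)"
      using inj by (simp add: bij_betw_inv_into inj_on_imp_bij_betw)
    fix x y assume "x \<in> ?V" "y \<in> ?V"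
    then show "(x, y) \<in> edges G \<inter> ?V \<times> ?V
        \<longleftrightarrow> (inv_into (verts H) \<phi> x, inv_into (verts H) \<phi> y) \<in> edges H"
      using inj emb by (auto simp: induced_embedding_def)
  qed
  ultimately show ?thesis using hC H unfolding hereditary_def by blast
qed

lemma bip_variant_verts: "verts (bip_variant H A B i j) = verts H"
  by (simp add: bip_variant_def make_clique_def Let_def)

lemma bip_variant_edges: "(u, v) \<in> edges (bip_variant H A B i j) \<longleftrightarrow>
   (u, v) \<in> edges H \<or> (i \<and> u \<in> A \<and> v \<in> A \<and> u \<noteq> v) \<or> (j \<and> u \<in> B \<and> v \<in> B \<and> u \<noteq> v)"
  by (auto simp: bip_variant_def make_clique_def Let_def)

lemma bip_variant_is_graph: "bipartite_with H A B \<Longrightarrow> is_graph (bip_variant H A B i j)"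
  unfolding is_graph_def bipartite_with_def bip_variant_verts
  by (auto simp: bip_variant_edges)

lemma inj_on_glue:
  assumes "inj_on \<alpha> A" "inj_on \<beta> B" "A \<inter> B = {}" "\<alpha> ` A \<inter> \<beta> ` B = {}"
  shows "inj_on (\<lambda>x. if x \<in> A then \<alpha> x else \<beta> x) (A \<union> B)"
    and "(\<lambda>x. if x \<in> A then \<alpha> x else \<beta> x) ` (A \<union> B) = \<alpha> ` A \<union> \<beta> ` B"
proof -
  let ?\<phi> = "\<lambda>x. if x \<in> A then \<alpha> x else \<beta> x"
  have on_A: "?\<phi> a = \<alpha> a" if "a \<in> A" for a using that by simp
  have on_B: "?\<phi> b = \<beta> b" if "b \<in> B" for b using that assms(3) by auto
  have img_A: "?\<phi> ` A = \<alpha> ` A" by (rule image_cong[OF refl on_A])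
  have img_B: "?\<phi> ` B = \<beta> ` B" by (rule image_cong[OF refl on_B])
  have "inj_on ?\<phi> A" using assms(1) by (simp only: inj_on_cong[OF on_A])
  moreover have "inj_on ?\<phi> B" using assms(2) by (simp only: inj_on_cong[OF on_B])
  moreover have "A - B = A" "B - A = B" using assms(3) by blast+
  ultimately show "inj_on ?\<phi> (A \<union> B)"
    using assms(4) img_A img_B by (simp only: inj_on_Un)
  show "?\<phi> ` (A \<union> B) = \<alpha> ` A \<union> \<beta> ` B" by (simp only: image_Un img_A img_B)
qed

lemma homogeneous_adjacency:
  assumes "is_graph G" "inj_on f X" "homogeneous (edges G) (f ` X) c" "u \<in> X" "v \<in> X"
  shows "(f u, f v) \<in> edges G \<longleftrightarrow> c \<and> u \<noteq> v"
  using assms by (cases "u = v") (auto simp: is_graph_def homogeneous_def inj_on_def)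

lemma bip_variant_embedding:
  assumes G: "is_graph G" and bip: "bipartite_with H A B"
    and inj\<alpha>: "inj_on \<alpha> A" and inj\<beta>: "inj_on \<beta> B"
    and sub: "\<alpha> ` A \<subseteq> verts G" "\<beta> ` B \<subseteq> verts G"
    and disj: "\<alpha> ` A \<inter> \<beta> ` B = {}"
    and hom\<alpha>: "homogeneous (edges G) (\<alpha> ` A) i"
    and hom\<beta>: "homogeneous (edges G) (\<beta> ` B) j"
    and cross: "\<And>a b. a \<in> A \<Longrightarrow> b \<in> B \<Longrightarrow> (\<alpha> a, \<beta> b) \<in> edges G \<longleftrightarrow> (a, b) \<in> edges H"
  shows "induced_embedding (bip_variant H A B i j) G (\<lambda>x. if x \<in> A then \<alpha> x else \<beta> x)"
    (is "induced_embedding _ G ?\<phi>")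
proof -
  have AB: "A \<inter> B = {}" and VH: "verts H = A \<union> B" and EH: "edges H \<subseteq> A \<times> B \<union> B \<times> A"
    and symH: "\<And>u v. (u, v) \<in> edges H \<Longrightarrow> (v, u) \<in> edges H"
    using bip unfolding bipartite_with_def is_graph_def by blast+
  have symG: "\<And>u v. (u, v) \<in> edges G \<Longrightarrow> (v, u) \<in> edges G"
    using G unfolding is_graph_def by blast
  have edges_eq: "(u, v) \<in> edges (bip_variant H A B i j) \<longleftrightarrow> (?\<phi> u, ?\<phi> v) \<in> edges G"
    if uv: "u \<in> A \<union> B" "v \<in> A \<union> B" for u v
  proof -
    consider "u \<in> A" "v \<in> A" | "u \<in> A" "v \<in> B" | "u \<in> B" "v \<in> A" | "u \<in> B" "v \<in> B"
      using uv by blast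
    then show ?thesis
    proof cases
      case 1
      then show ?thesis
        using AB EH homogeneous_adjacency[OF G inj\<alpha> hom\<alpha>] unfolding bip_variant_edges by auto
    next
      case 2
      then show ?thesis using AB cross unfolding bip_variant_edges by auto
    next
      case 3
      have "(u, v) \<in> edges (bip_variant H A B i j) \<longleftrightarrow> (v, u) \<in> edges H"
        using 3 AB symH unfolding bip_variant_edges by blast
      also have "\<dots> \<longleftrightarrow> (\<alpha> v, \<beta> u) \<in> edges G" using cross 3 by blast
      also have "\<dots> \<longleftrightarrow> (\<beta> u, \<alpha> v) \<in> edges G" using symG by blast
      finally show ?thesis using 3 AB by auto
    next
      case 4
      then show ?thesis
        using AB EH homogeneous_adjacency[OF G inj\<beta> hom\<beta>] unfolding bip_variant_edges by auto
    qed
  qed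
  note glue = inj_on_glue[OF inj\<alpha> inj\<beta> AB disj]
  show ?thesis
    unfolding induced_embedding_def bip_variant_verts VH glue(2)
    using glue(1) sub edges_eq by blast
qed

text \<open>Subsets of shattered sets are shattered: a witness for S within X also
  witnesses S within Y.\<close>
lemma shattered_subset:
  assumes X: "shattered G X" and YX: "Y \<subseteq> X"
  shows "shattered G Y"
  unfolding shattered_def
proof (intro conjI allI impI)
  show "Y \<subseteq> verts G" using X YX unfolding shattered_def by blast
  fix S assume "S \<subseteq> Y"
  then obtain v where "v \<in> verts G" "closed_nbhd G v \<inter> X = S"
    using X YX unfolding shattered_def by (meson order_trans)
  moreover have "closed_nbhd G v \<inter> Y = closed_nbhd G v \<inter> X \<inter> Y" using YX by blast
  ultimately show "\<exists>v\<in>verts G. closed_nbhd G v \<inter> Y = S" using \<open>S \<subseteq> Y\<close> by blast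
qed

lemma homogeneous_shattered_set:
  assumes graphs: "\<forall>G\<in>C. is_graph G" and vc: "infinite_VC_dim C"
  shows "\<exists>G\<in>C. \<exists>Y c. shattered G Y \<and> card Y = m \<and> homogeneous (edges G) Y c"
proof -
  obtain r where r: "\<forall>(V::'a set) R. finite V \<longrightarrow> card V \<ge> r \<longrightarrow> sym R \<longrightarrow>
      (\<exists>U\<subseteq>V. card U = m \<and> (\<exists>c. homogeneous R U c))"
    using ramsey_homogeneous by blast
  obtain G X where G: "G \<in> C" and X: "shattered G X" "card X \<ge> r"
    using vc unfolding infinite_VC_dim_def by blast
  have "finite X" "sym (edges G)"
    using graphs G X by (auto simp: is_graph_def shattered_def sym_def intro: finite_subset)
  then obtain Y c where "Y \<subseteq> X" "card Y = m" "homogeneous (edges G) Y c"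
    using r X by blast
  then show ?thesis using G shattered_subset[OF X(1)] by blast
qed

lemma closed_nbhd_in_homogeneous:
  assumes "homogeneous (edges G) Y c" "v \<in> Y"
  shows "closed_nbhd G v \<inter> Y = (if c then Y else {v})"
  using assms by (auto simp: homogeneous_def closed_nbhd_def)

text \<open>If Y is a shattered homogeneous set
  indexed by pairs (P, k) with P \<subseteq> T and k < n (n \<ge> 2, so each pattern has
  several copies), then each label t \<in> T has its own witness outside Y that is
  adjacent to the point (P, k) exactly when t \<in> P.\<close>
lemma shattered_realises_incidence:
  fixes n :: nat
  assumes G: "is_graph G" and e: "bij_betw e (Pow T \<times> {..<n}) Y"
    and shY: "shattered G Y" and homY: "homogeneous (edges G) Y c" and n: "2 \<le> n"
  shows "\<exists>w. inj_on w T \<and> w ` T \<subseteq> verts G - Y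
    \<and> (\<forall>t\<in>T. \<forall>P\<in>Pow T. \<forall>k<n. (w t, e (P, k)) \<in> edges G \<longleftrightarrow> t \<in> P)"
proof -
  let ?J = "Pow T \<times> {..<n}"
  have inj_e: "inj_on e ?J" and img_e: "e ` ?J = Y" using e by (auto simp: bij_betw_def)
  define S where "S t = e ` {x \<in> ?J. t \<in> fst x}" for t
  have memS: "e x \<in> S t \<longleftrightarrow> t \<in> fst x" if "x \<in> ?J" for x t
    unfolding S_def using inj_on_image_mem_iff[OF inj_e that] that by blast
  have "S t \<subseteq> Y" for t unfolding S_def img_e[symmetric] by blast
  then have "\<exists>v\<in>verts G. closed_nbhd G v \<inter> Y = S t" for t
    using shY unfolding shattered_def by blast
  then obtain w where wG: "\<And>t. w t \<in> verts G" and wN: "\<And>t. closed_nbhd G (w t) \<inter> Y = S t"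
    by metis
  text \<open>S t omits e({},0) but contains the two points e({t},0) and e({t},1), so it is
    neither Y nor a singleton; hence its witness cannot lie in Y.\<close>
  have outside: "w t \<notin> Y" if t: "t \<in> T" for t
  proof
    assume "w t \<in> Y"
    then have cases: "S t = Y \<or> S t = {w t}"
      using closed_nbhd_in_homogeneous[OF homY] wN by metis
    have J: "({}, 0) \<in> ?J" "({t}, 0) \<in> ?J" "({t}, 1) \<in> ?J" using t n by auto
    have "e ({}, 0) \<in> Y" "e ({}, 0) \<notin> S t" using img_e memS J by auto
    then have "S t \<noteq> Y" by blast
    moreover have "e ({t}, 0) \<in> S t" "e ({t}, 1) \<in> S t" using memS J by auto
    moreover have "e ({t}, 0) \<noteq> e ({t}, 1)" using inj_onD[OF inj_e _ J(2,3)] by auto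
    ultimately show False using cases by auto
  qed
  have "inj_on w T"
  proof (rule inj_onI)
    fix s t assume "s \<in> T" "t \<in> T" and same: "w s = w t"
    have J: "({s}, 0) \<in> ?J" using \<open>s \<in> T\<close> n by auto
    have "S s = S t" using wN[of s] wN[of t] same by simp
    then have "e ({s}, 0) \<in> S t" using memS[OF J, of s] by simp
    then show "s = t" using memS[OF J] by auto
  qed
  moreover have "w ` T \<subseteq> verts G - Y" using wG outside by blast
  moreover have "\<forall>t\<in>T. \<forall>P\<in>Pow T. \<forall>k<n. (w t, e (P, k)) \<in> edges G \<longleftrightarrow> t \<in> P"
  proof (intro ballI allI impI)
    fix t P k assume t: "t \<in> T" and "P \<in> Pow T" "k < n"
    then have x: "(P, k) \<in> ?J" by simp
    have "e (P, k) \<in> Y" "w t \<noteq> e (P, k)" using x t outside img_e by auto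
    then have "(w t, e (P, k)) \<in> edges G \<longleftrightarrow> e (P, k) \<in> closed_nbhd G (w t) \<inter> Y"
      unfolding closed_nbhd_def by auto
    also have "\<dots> \<longleftrightarrow> t \<in> P" using wN memS[OF x] by simp
    finally show "(w t, e (P, k)) \<in> edges G \<longleftrightarrow> t \<in> P" .
  qed
  ultimately show ?thesis by blast
qed

text \<open>Suppose the labels T correspond to A, each pattern
  (P, k) with P \<subseteq> T and k < |B| has a point e(P, k) in a homogeneous set Y of
  colour j, and the labels have injective witnesses outside Y, forming a
  homogeneous set of colour i and adjacent to e(P, k) exactly when t \<in> P.  Then
  H^{i,j} embeds: a \<in> A goes to the witness of its label, and the k-th vertex
  b of B goes to e(N, k), where N is the set of labels of its neighbours.\<close>
lemma incidence_pattern_embedding: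
  assumes G: "is_graph G" and bip: "bipartite_with H A B"
    and T: "finite T" "card T = card A"
    and inj_e: "inj_on e (Pow T \<times> {..<card B})"
    and eY: "e ` (Pow T \<times> {..<card B}) \<subseteq> Y" and Y: "Y \<subseteq> verts G"
    and homY: "homogeneous (edges G) Y j"
    and inj_w: "inj_on w T" and wT: "w ` T \<subseteq> verts G - Y"
    and homW: "homogeneous (edges G) (w ` T) i"
    and incid: "\<forall>t\<in>T. \<forall>P\<in>Pow T. \<forall>k<card B. (w t, e (P, k)) \<in> edges G \<longleftrightarrow> t \<in> P"
  shows "\<exists>\<phi>. induced_embedding (bip_variant H A B i j) G \<phi>"
proof -
  have finA: "finite A" and finB: "finite B"
    using bip unfolding bipartite_with_def is_graph_def by (metis finite_Un)+
  obtain \<alpha> where inj\<alpha>: "inj_on \<alpha> A" and img\<alpha>: "\<alpha> ` A = T"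
    using finA T by (metis bij_betw_def finite_same_card_bij)
  obtain \<gamma> where inj\<gamma>: "inj_on \<gamma> B" and img\<gamma>: "\<gamma> ` B = {..<card B}"
    using finB by (metis bij_betw_def finite_same_card_bij card_lessThan finite_lessThan)
  define N where "N b = \<alpha> ` {a \<in> A. (a, b) \<in> edges H}" for b
  define \<beta> where "\<beta> b = e (N b, \<gamma> b)" for b
  have NJ: "(N b, \<gamma> b) \<in> Pow T \<times> {..<card B}" if "b \<in> B" for b
    using that img\<alpha> img\<gamma> unfolding N_def by blast
  have \<beta>Y: "\<beta> ` B \<subseteq> Y" using eY NJ unfolding \<beta>_def by blast
  have "induced_embedding (bip_variant H A B i j) G (\<lambda>x. if x \<in> A then (w \<circ> \<alpha>) x else \<beta> x)"
  proof (rule bip_variant_embedding[OF G bip])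
    show "inj_on (w \<circ> \<alpha>) A" using inj\<alpha> img\<alpha> inj_w by (metis comp_inj_on)
    show "inj_on \<beta> B"
    proof (rule inj_onI)
      fix b b' assume b: "b \<in> B" "b' \<in> B" "\<beta> b = \<beta> b'"
      then have "\<gamma> b = \<gamma> b'" using inj_e NJ unfolding \<beta>_def inj_on_def by blast
      then show "b = b'" using inj\<gamma> b by (meson inj_onD)
    qed
    have img_w\<alpha>: "(w \<circ> \<alpha>) ` A = w ` T" by (simp only: image_comp[symmetric] img\<alpha>)
    show "(w \<circ> \<alpha>) ` A \<subseteq> verts G" "\<beta> ` B \<subseteq> verts G" "(w \<circ> \<alpha>) ` A \<inter> \<beta> ` B = {}"
      unfolding img_w\<alpha> using wT \<beta>Y Y by blast+
    show "homogeneous (edges G) ((w \<circ> \<alpha>) ` A) i" unfolding img_w\<alpha> by (rule homW)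
    show "homogeneous (edges G) (\<beta> ` B) j"
      using homogeneous_subset[OF homY \<beta>Y] .
    show "((w \<circ> \<alpha>) a, \<beta> b) \<in> edges G \<longleftrightarrow> (a, b) \<in> edges H" if "a \<in> A" "b \<in> B" for a b
    proof -
      have "((w \<circ> \<alpha>) a, \<beta> b) \<in> edges G \<longleftrightarrow> \<alpha> a \<in> N b"
        using incid img\<alpha> NJ[OF that(2)] that(1) unfolding \<beta>_def by auto
      also have "\<dots> \<longleftrightarrow> (a, b) \<in> edges H"
        using inj\<alpha> that unfolding N_def inj_on_def by blast
      finally show ?thesis .
    qed
  qed
  then show ?thesis by blast
qed

text \<open>Y is indexed by Pow T \<times> {..<|B|+2},
  with T so large that Ramsey's theorem finds |A| witnesses forming a homogeneous
  set; the second index has at least |B| values, so that vertices of B with equal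
  neighbourhoods get distinct points, and at least 2, as the witness lemma needs.\<close>
lemma some_bip_variant_in_class:
  fixes C :: "nat graph set" and H :: "nat graph" and A B :: "nat set"
  assumes hC: "hereditary C" and vc: "infinite_VC_dim C" and bip: "bipartite_with H A B"
  shows "\<exists>i j. bip_variant H A B i j \<in> C"
proof -
  have graphs: "\<forall>G\<in>C. is_graph G" using hC unfolding hereditary_def by blast
  obtain r where r: "\<forall>(V::nat set) R. finite V \<longrightarrow> card V \<ge> r \<longrightarrow> sym R \<longrightarrow>
      (\<exists>U\<subseteq>V. card U = card A \<and> (\<exists>c. homogeneous R U c))"
    using ramsey_homogeneous by blast
  define T where "T = {..<r}"
  define J where "J = Pow T \<times> {..<card B + 2}"
  obtain G Y j where G: "G \<in> C" and shY: "shattered G Y" and cardY: "card Y = card J"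
    and homY: "homogeneous (edges G) Y j"
    using homogeneous_shattered_set[OF graphs vc] by blast
  have gG: "is_graph G" using graphs G by blast
  have Y: "Y \<subseteq> verts G" "finite Y"
    using shY gG unfolding shattered_def is_graph_def by (auto intro: finite_subset)
  then obtain e where e: "bij_betw e J Y"
    using cardY unfolding J_def T_def
    by (metis finite_same_card_bij finite_Pow_iff finite_SigmaI finite_lessThan)
  obtain w where inj_w: "inj_on w T" and wT: "w ` T \<subseteq> verts G - Y"
    and incid: "\<forall>t\<in>T. \<forall>P\<in>Pow T. \<forall>k<card B + 2. (w t, e (P, k)) \<in> edges G \<longleftrightarrow> t \<in> P"
    using shattered_realises_incidence[OF gG e[unfolded J_def] shY homY] by auto
  have "sym {(s, t). (w s, w t) \<in> edges G}" using gG by (auto simp: is_graph_def sym_def)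
  then obtain T' i where T': "T' \<subseteq> T" "card T' = card A"
    and homT': "homogeneous {(s, t). (w s, w t) \<in> edges G} T' i"
    using r unfolding T_def by (metis finite_lessThan card_lessThan order_refl)
  have J': "Pow T' \<times> {..<card B} \<subseteq> J" using T' unfolding J_def by auto
  have "\<exists>\<phi>. induced_embedding (bip_variant H A B i j) G \<phi>"
  proof (rule incidence_pattern_embedding[OF gG bip _ T'(2) _ _ Y(1) homY])
    show "finite T'" using T' finite_subset unfolding T_def by blast
    show "inj_on e (Pow T' \<times> {..<card B})" "e ` (Pow T' \<times> {..<card B}) \<subseteq> Y"
      using e J' by (auto simp: bij_betw_def intro: inj_on_subset)
    show "inj_on w T'" "w ` T' \<subseteq> verts G - Y"
      using inj_w wT T' by (auto intro: inj_on_subset)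
    show "homogeneous (edges G) (w ` T') i" using homogeneous_image[OF homT'] .
    show "\<forall>t\<in>T'. \<forall>P\<in>Pow T'. \<forall>k<card B. (w t, e (P, k)) \<in> edges G \<longleftrightarrow> t \<in> P"
    proof (intro ballI allI impI)
      fix t P k assume "t \<in> T'" "P \<in> Pow T'" "k < card B"
      then have "t \<in> T" "P \<in> Pow T" "k < card B + 2" using T' by auto
      then show "(w t, e (P, k)) \<in> edges G \<longleftrightarrow> t \<in> P" using incid by blast
    qed
  qed
  then show ?thesis
    using induced_embedding_in_class[OF hC G bip_variant_is_graph[OF bip]] by blast
qed

theorem mainTheorem7:
  fixes \<C> :: "nat graph set" and H :: "nat graph" and A B :: "nat set"
  assumes "hereditary \<C>"
    and "infinite_VC_dim \<C>"
    and "bipartite_with H A B"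
  shows "bip_variant H A B False False \<in> \<C> \<or> bip_variant H A B True False \<in> \<C>
       \<or> bip_variant H A B False True \<in> \<C> \<or> bip_variant H A B True True \<in> \<C>"
proof -
  obtain i j where "bip_variant H A B i j \<in> \<C>"
    using some_bip_variant_in_class[OF assms] by blast
  then show ?thesis by (cases i; cases j) auto
qed

end
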